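(* Let $P$ be a positive opetope of dimension $n$ with top face $x_n=\mathbf{m}_P$. For every maximal flag $\vec{x}$ of $P$ that is not the $\lhd$-largest one, $\mathrm{succ}(\vec{x})$ is the immediate successor of $\vec{x}$ with respect to the flag order $\lhd$ on the set of maximal flags of $P$.
   Context: A positive hypergraph $S$ consists of finite sets $S_k$ ($k\in\mathbb{N}$), only finitely many nonempty, functions $\gamma:S_{k+1}\to S_k$, and for each $k$ an assignment $\delta$ sending each $a\in S_{k+1}$ to a nonempty subset $\delta(a)\subseteq S_k$, with $\delta(a)$ a singleton for $a\in S_1$. A face is identified with its singleton; $\gamma(X)=\{\gamma(a):a\in X\}$, $\delta(X)=\bigcup_{a\in X}\delta(a)$. For $k>0$ the lower order $<^-$ on $S_k$ is the transitive closure of: $a\lhd b$ iff $\gamma(a)\in\delta(b)$. The upper order $<^+$ on $S_k$ is the transitive closure of: $a\lhd b$ iff there is $\alpha\in S_{k+1}$ with $a\in\delta(\alpha)$, $\gamma(\alpha)=b$; $a\perp^{\pm}b$ iff $a<^{\pm}b$ or $b<^{\pm}a$. A positive opetopic cardinal: $S_0\ne\emptyset$; globularity ($\gamma\gamma(a)=\gamma\delta(a)-\delta\delta(a)$, $\delta\gamma(a)=\delta\delta(a)-\gamma\delta(a)$ for $\dim a\ge2$); each $<^+$ a strict order, linear on $S_0$; for $k>0$, $\perp^-\cap\perp^+=\emptyset$ on $S_k$; for $x\in S_{k-1}$, $\{a:\gamma(a)=x\}$ and $\{a:x\in\delta(a)\}$ linearly ordered by $<^+$. A positive opetope: additionally $|P_m-\delta(P_{m+1})|\le1$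 for all $m$; if $\dim P=n$ then $P_n=\{\mathbf m_P\}$. Write $\partial(a)=\{\gamma(a)\}\cup\delta(a)$. A maximal flag is a sequence $\vec{x}=[x_n,\dots,x_0]$ with $x_n=\mathbf m_P$, $x_i\in P_i$ and $x_i\in\partial(x_{i+1})$ for $i<n$. The sign of a sequence $[x_k,\dots,x_l]$ of this kind is $1$ if $k=l$, equals $\mathrm{sgn}([x_{k-1},\dots,x_l])$ if $x_{k-1}=\gamma(x_k)$, and equals $-\mathrm{sgn}([x_{k-1},\dots,x_l])$ if $x_{k-1}\in\delta(x_k)$; $\mathrm{sgn}(\vec x)=\mathrm{sgn}([x_n,\dots,x_0])$. For $x\in P_k$, on the pencil $\{a\in P_{k+1}: x\in\partial(a)\}$ define $a\prec_x b$ iff (i) $\gamma(b)=x\in\delta(a)$, or (ii) $x\in\delta(a)\cap\delta(b)$ and $a<^+b$, or (iii) $\gamma(a)=x=\gamma(b)$ and $b<^+a$. For distinct maximal flags $\vec x,\vec y$ with $k=\min\{j:x_j\ne y_j\}$, put $\vec x\lhd\vec y$ iff $k=0$ and $y_0<^+x_0$; or $k>0$, $\mathrm{sgn}([x_{k-1},\dots,x_0])=1$ and $x_k\prec_{x_{k-1}}y_k$; or $k>0$, $\mathrm{sgn}([x_{k-1},\dots,x_0])=-1$ and $y_k\prec_{x_{k-1}}x_k$. (This is a strict linear order on maximal flags.) For a maximal flag $\vec x$ that is neither $\lhd$-first nor $\lhd$-last, its low level is $\mathrm{ll}(\vec x)=\max\{i<n-1: x_{i+1}\in\delta(x_{i+2})\}$.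 A maximal flag $\vec y$ is the $k$-th neighbour of $\vec x$ if $\vec y\ne\vec x$ and $y_i=x_i$ for all $i\ne k$. The high neighbour of $\vec x$ is its $(n-1)$-th neighbour, the low neighbour its $\mathrm{ll}(\vec x)$-th neighbour. For a non-terminal maximal flag, $\mathrm{succ}(\vec x)$ is the high neighbour of $\vec x$ if $\mathrm{sgn}(\vec x)=1$ and the low neighbour of $\vec x$ if $\mathrm{sgn}(\vec x)=-1$. *)

theory Defs
  imports Main
begin

text \<open>A positive hypergraph is given by the graded family of face sets
  S k, the target function gam and the source assignment del.
  Faces of different dimensions are distinct (S k pairwise disjoint).\<close>

definition bd :: "('a \<Rightarrow> 'a) \<Rightarrow> ('a \<Rightarrow> 'a set) \<Rightarrow> 'a \<Rightarrow> 'a set" where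
  "bd gam del a = insert (gam a) (del a)"

definition positive_hypergraph ::
  "(nat \<Rightarrow> 'a set) \<Rightarrow> ('a \<Rightarrow> 'a) \<Rightarrow> ('a \<Rightarrow> 'a set) \<Rightarrow> bool" where
  "positive_hypergraph S gam del \<longleftrightarrow>
     (\<forall>k. finite (S k)) \<and>
     (\<forall>k l. k \<noteq> l \<longrightarrow> S k \<inter> S l = {}) \<and>
     (\<exists>N. \<forall>k>N. S k = {}) \<and>
     (\<forall>k. \<forall>a\<in>S (Suc k). gam a \<in> S k) \<and>
     (\<forall>k. \<forall>a\<in>S (Suc k). del a \<subseteq> S k \<and> del a \<noteq> {}) \<and>
     (\<forall>a\<in>S 1. \<exists>b. del a = {b})"

definition lower_rel ::
  "(nat \<Rightarrow> 'a set) \<Rightarrow> ('a \<Rightarrow> 'a) \<Rightarrow> ('a \<Rightarrow> 'a set) \<Rightarrow> nat \<Rightarrow> 'a rel" where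
  "lower_rel S gam del k = {(a, b). a \<in> S k \<and> b \<in> S k \<and> gam a \<in> del b}"

definition lower_lt ::
  "(nat \<Rightarrow> 'a set) \<Rightarrow> ('a \<Rightarrow> 'a) \<Rightarrow> ('a \<Rightarrow> 'a set) \<Rightarrow> nat \<Rightarrow> 'a \<Rightarrow> 'a \<Rightarrow> bool" where
  "lower_lt S gam del k a b \<longleftrightarrow> (a, b) \<in> (lower_rel S gam del k)\<^sup>+"

definition upper_rel ::
  "(nat \<Rightarrow> 'a set) \<Rightarrow> ('a \<Rightarrow> 'a) \<Rightarrow> ('a \<Rightarrow> 'a set) \<Rightarrow> nat \<Rightarrow> 'a rel" where
  "upper_rel S gam del k =
     {(a, b). a \<in> S k \<and> b \<in> S k \<and> (\<exists>\<alpha>\<in>S (Suc k). a \<in> del \<alpha> \<and> gam \<alpha> = b)}"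

definition upper_lt ::
  "(nat \<Rightarrow> 'a set) \<Rightarrow> ('a \<Rightarrow> 'a) \<Rightarrow> ('a \<Rightarrow> 'a set) \<Rightarrow> nat \<Rightarrow> 'a \<Rightarrow> 'a \<Rightarrow> bool" where
  "upper_lt S gam del k a b \<longleftrightarrow> (a, b) \<in> (upper_rel S gam del k)\<^sup>+"

definition positive_opetopic_cardinal ::
  "(nat \<Rightarrow> 'a set) \<Rightarrow> ('a \<Rightarrow> 'a) \<Rightarrow> ('a \<Rightarrow> 'a set) \<Rightarrow> bool" where
  "positive_opetopic_cardinal S gam del \<longleftrightarrow>
     positive_hypergraph S gam del \<and>
     S 0 \<noteq> {} \<and>
     \<comment> \<open>globularity\<close>
     (\<forall>k\<ge>2. \<forall>a\<in>S k.
        {gam (gam a)} = gam ` del a - \<Union> (del ` del a) \<and>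
        del (gam a) = \<Union> (del ` del a) - gam ` del a) \<and>
     \<comment> \<open>each upper order is a strict order\<close>
     (\<forall>k. \<forall>a\<in>S k. \<not> upper_lt S gam del k a a) \<and>
     \<comment> \<open>upper order linear on S 0\<close>
     (\<forall>a\<in>S 0. \<forall>b\<in>S 0. a \<noteq> b \<longrightarrow> upper_lt S gam del 0 a b \<or> upper_lt S gam del 0 b a) \<and>
     \<comment> \<open>lower and upper comparability disjoint in positive dimension\<close>
     (\<forall>k>0. \<forall>a\<in>S k. \<forall>b\<in>S k.
        \<not> ((lower_lt S gam del k a b \<or> lower_lt S gam del k b a) \<and>
           (upper_lt S gam del k a b \<or> upper_lt S gam del k b a))) \<and>
     \<comment> \<open>fibres of gam and del linearly ordered by the upper order\<close>
     (\<forall>k. \<forall>x\<in>S k. \<forall>a\<in>S (Suc k). \<forall>b\<in>S (Suc k).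
        gam a = x \<longrightarrow> gam b = x \<longrightarrow> a \<noteq> b \<longrightarrow>
        upper_lt S gam del (Suc k) a b \<or> upper_lt S gam del (Suc k) b a) \<and>
     (\<forall>k. \<forall>x\<in>S k. \<forall>a\<in>S (Suc k). \<forall>b\<in>S (Suc k).
        x \<in> del a \<longrightarrow> x \<in> del b \<longrightarrow> a \<noteq> b \<longrightarrow>
        upper_lt S gam del (Suc k) a b \<or> upper_lt S gam del (Suc k) b a)"

definition has_dim :: "(nat \<Rightarrow> 'a set) \<Rightarrow> nat \<Rightarrow> bool" where
  "has_dim S n \<longleftrightarrow> S n \<noteq> {} \<and> (\<forall>k>n. S k = {})"

definition positive_opetope ::
  "(nat \<Rightarrow> 'a set) \<Rightarrow> ('a \<Rightarrow> 'a) \<Rightarrow> ('a \<Rightarrow> 'a set) \<Rightarrow> nat \<Rightarrow> bool" where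
  "positive_opetope S gam del n \<longleftrightarrow>
     positive_opetopic_cardinal S gam del \<and>
     (\<forall>m. card (S m - \<Union> (del ` S (Suc m))) \<le> 1) \<and>
     has_dim S n \<and> (\<exists>t. S n = {t})"

definition top_face :: "(nat \<Rightarrow> 'a set) \<Rightarrow> nat \<Rightarrow> 'a" where
  "top_face S n = the_elem (S n)"

text \<open>Maximal flags [x_n, ..., x_0], represented as lists of length n+1
  with x ! i = x_i.\<close>
definition max_flags ::
  "(nat \<Rightarrow> 'a set) \<Rightarrow> ('a \<Rightarrow> 'a) \<Rightarrow> ('a \<Rightarrow> 'a set) \<Rightarrow> nat \<Rightarrow> 'a list set" where
  "max_flags S gam del n =
     {x. length x = Suc n \<and> x ! n = top_face S n \<and>
         (\<forall>i\<le>n. x ! i \<in> S i) \<and>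
         (\<forall>i<n. x ! i \<in> bd gam del (x ! Suc i))}"

text \<open>fsgn gam x k is the sign of the sequence [x_k, ..., x_0].\<close>
fun fsgn :: "('a \<Rightarrow> 'a) \<Rightarrow> 'a list \<Rightarrow> nat \<Rightarrow> int" where
  "fsgn gam x 0 = 1"
| "fsgn gam x (Suc k) =
     (if x ! k = gam (x ! Suc k) then fsgn gam x k else - fsgn gam x k)"

definition pencil_lt ::
  "(nat \<Rightarrow> 'a set) \<Rightarrow> ('a \<Rightarrow> 'a) \<Rightarrow> ('a \<Rightarrow> 'a set) \<Rightarrow> nat \<Rightarrow> 'a \<Rightarrow> 'a \<Rightarrow> 'a \<Rightarrow> bool" where
  "pencil_lt S gam del k x a b \<longleftrightarrow>
     a \<in> S (Suc k) \<and> b \<in> S (Suc k) \<and> x \<in> bd gam del a \<and> x \<in> bd gam del b \<and>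
     ((gam b = x \<and> x \<in> del a) \<or>
      (x \<in> del a \<and> x \<in> del b \<and> upper_lt S gam del (Suc k) a b) \<or>
      (gam a = x \<and> gam b = x \<and> upper_lt S gam del (Suc k) b a))"

definition flag_lt ::
  "(nat \<Rightarrow> 'a set) \<Rightarrow> ('a \<Rightarrow> 'a) \<Rightarrow> ('a \<Rightarrow> 'a set) \<Rightarrow> 'a list \<Rightarrow> 'a list \<Rightarrow> bool" where
  "flag_lt S gam del x y \<longleftrightarrow> x \<noteq> y \<and>
     (let k = (LEAST j. x ! j \<noteq> y ! j) in
       (k = 0 \<and> upper_lt S gam del 0 (y ! 0) (x ! 0)) \<or>
       (k > 0 \<and> fsgn gam x (k - 1) = 1 \<and> pencil_lt S gam del (k - 1) (x ! (k - 1)) (x ! k) (y ! k)) \<or>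
       (k > 0 \<and> fsgn gam x (k - 1) = -1 \<and> pencil_lt S gam del (k - 1) (x ! (k - 1)) (y ! k) (x ! k)))"

definition is_last_flag ::
  "(nat \<Rightarrow> 'a set) \<Rightarrow> ('a \<Rightarrow> 'a) \<Rightarrow> ('a \<Rightarrow> 'a set) \<Rightarrow> nat \<Rightarrow> 'a list \<Rightarrow> bool" where
  "is_last_flag S gam del n x \<longleftrightarrow>
     (\<forall>y\<in>max_flags S gam del n. y \<noteq> x \<longrightarrow> flag_lt S gam del y x)"

definition low_level :: "('a \<Rightarrow> 'a set) \<Rightarrow> nat \<Rightarrow> 'a list \<Rightarrow> nat" where
  "low_level del n x = Max {i. i < n - 1 \<and> x ! Suc i \<in> del (x ! Suc (Suc i))}"

definition is_neighbour ::
  "(nat \<Rightarrow> 'a set) \<Rightarrow> ('a \<Rightarrow> 'a) \<Rightarrow> ('a \<Rightarrow> 'a set) \<Rightarrow> nat \<Rightarrow> nat \<Rightarrow> 'a list \<Rightarrow> 'a list \<Rightarrow> bool" where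
  "is_neighbour S gam del n k x y \<longleftrightarrow>
     y \<in> max_flags S gam del n \<and> y \<noteq> x \<and> (\<forall>i\<le>n. i \<noteq> k \<longrightarrow> y ! i = x ! i)"

definition is_succ ::
  "(nat \<Rightarrow> 'a set) \<Rightarrow> ('a \<Rightarrow> 'a) \<Rightarrow> ('a \<Rightarrow> 'a set) \<Rightarrow> nat \<Rightarrow> 'a list \<Rightarrow> 'a list \<Rightarrow> bool" where
  "is_succ S gam del n x y \<longleftrightarrow>
     (if fsgn gam x n = 1 then is_neighbour S gam del n (n - 1) x y
      else is_neighbour S gam del n (low_level del n x) x y)"

definition is_immediate_successor ::
  "(nat \<Rightarrow> 'a set) \<Rightarrow> ('a \<Rightarrow> 'a) \<Rightarrow> ('a \<Rightarrow> 'a set) \<Rightarrow> nat \<Rightarrow> 'a list \<Rightarrow> 'a list \<Rightarrow> bool" where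
  "is_immediate_successor S gam del n x y \<longleftrightarrow>
     y \<in> max_flags S gam del n \<and> flag_lt S gam del x y \<and>
     \<not> (\<exists>z\<in>max_flags S gam del n. flag_lt S gam del x z \<and> flag_lt S gam del z y)"

end

theory Submission
  imports Defs
begin

text \<open>
  The key fact about a positive opetopic cardinal is a diamond property: if f is a face of u
  and u a face of \<alpha>, with dim \<alpha> = dim f + 2, then exactly two faces p, q of \<alpha> have f as a
  face; they are ordered p \<prec> q in the pencil at f, and the signs of [\<alpha>, p, f] and [\<alpha>, q, f]
  are 1 and -1. Consequently a maximal flag x has exactly one k-th neighbour for each k < n; it
  has the opposite sign, and it lies above x in the flag order whenever sgn [x_(k+1), ..., x_0] = 1.

  succ x is a neighbour at a level where this partial sign is 1, so x \<lhd> succ x. Taking the other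
  choice (the low neighbour of a positive flag, the high neighbour of a negative one) inverts succ,
  and the only flag without such a predecessor is the positive flag all of whose entries are
  targets, x_i = \<gamma> x_(i+1). Hence iterating succ from this flag enumerates all maximal flags in
  increasing order, and succ x is the immediate successor of x.
\<close>

section \<open>Enumerating a finite order by a successor function\<close>

text \<open>Iterating succ from the unique element that is not a successor enumerates F in increasing
  order.\<close>
locale succ_chain =
  fixes F :: "'b set" and lt :: "'b \<Rightarrow> 'b \<Rightarrow> bool" and D :: "'b set" and succ :: "'b \<Rightarrow> 'b"
  assumes finite_F: "finite F"
    and lt_irrefl: "\<not> lt x x"
    and lt_trans: "x \<in> F \<Longrightarrow> y \<in> F \<Longrightarrow> z \<in> F \<Longrightarrow> lt x y \<Longrightarrow> lt y z \<Longrightarrow> lt x z"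
    and D_subset: "D \<subseteq> F"
    and succ_in: "x \<in> D \<Longrightarrow> succ x \<in> F"
    and less_succ: "x \<in> D \<Longrightarrow> lt x (succ x)"
    and at_most_one_non_succ:
      "y \<in> F - succ ` D \<Longrightarrow> y' \<in> F - succ ` D \<Longrightarrow> y = y'"
begin

definition first :: 'b where
  "first = (THE y. y \<in> F - succ ` D)"

definition iter :: "nat \<Rightarrow> 'b" where
  "iter i = (succ ^^ i) first"

abbreviation reached :: "nat \<Rightarrow> bool" where
  "reached i \<equiv> \<forall>l<i. iter l \<in> D"

lemma wf_lt: "wf {(x, y). x \<in> F \<and> y \<in> F \<and> lt x y}"
proof (rule finite_acyclic_wf)
  let ?R = "{(x, y). x \<in> F \<and> y \<in> F \<and> lt x y}"
  show "finite ?R"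
    by (rule finite_subset[of _ "F \<times> F"]) (use finite_F in auto)
  have "trans ?R"
    unfolding trans_def using lt_trans by blast
  then show "acyclic ?R"
    unfolding acyclic_def trancl_id[OF \<open>trans ?R\<close>] using lt_irrefl by simp
qed

lemma iter_reaches: "y \<in> F \<Longrightarrow> \<exists>i. y = iter i \<and> reached i"
proof (induction y rule: wf_induct[OF wf_lt])
  case (1 y)
  show ?case
  proof (cases "y \<in> succ ` D")
    case False
    then have "first = y"
      unfolding first_def using 1 at_most_one_non_succ by (intro the_equality) blast+
    then show ?thesis
      unfolding iter_def by (intro exI[of _ 0]) simp
  next
    case True
    then obtain x where x: "x \<in> D" "y = succ x" by blast
    then obtain i where "x = iter i" "reached i"
      using 1 D_subset less_succ by blast
    then have "y = iter (Suc i)" "reached (Suc i)"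
      using x by (auto simp: iter_def less_Suc_eq)
    then show ?thesis by blast
  qed
qed

lemma iter_strict_mono: "reached j \<Longrightarrow> i < j \<Longrightarrow> lt (iter i) (iter j)"
proof (induction j arbitrary: i)
  case (Suc j)
  have j: "iter j \<in> D" and succ_j: "iter (Suc j) = succ (iter j)"
    using Suc.prems by (auto simp: iter_def)
  show ?case
  proof (cases "i = j")
    case True
    then show ?thesis using j succ_j less_succ by simp
  next
    case False
    then have "lt (iter i) (iter j)" and "iter i \<in> D"
      using Suc by auto
    then show ?thesis
      using lt_trans j succ_j succ_in less_succ D_subset by (metis subsetD)
  qed
qed simp

lemma greatest_if_not_in_D:
  assumes "x \<in> F" "x \<notin> D" "y \<in> F" "y \<noteq> x"
  shows "lt y x"
proof -
  obtain c b where c: "x = iter c" "reached c" and b: "y = iter b" "reached b"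
    using iter_reaches assms by metis
  consider "b < c" | "b = c" | "c < b" by linarith
  then show ?thesis
    by cases (use assms b c iter_strict_mono in auto)
qed

lemma succ_immediate:
  assumes x: "x \<in> D" and z: "z \<in> F"
  shows "\<not> (lt x z \<and> lt z (succ x))"
proof
  assume between: "lt x z \<and> lt z (succ x)"
  obtain c where c: "x = iter c" "reached (Suc c)"
    using iter_reaches x D_subset by (metis less_Suc_eq subsetD)
  have succ_c: "succ x = iter (Suc c)"
    using c by (simp add: iter_def)
  obtain b where b: "z = iter b" "reached b"
    using iter_reaches z by blast
  consider "b \<le> c" | "b = Suc c" | "Suc c < b" by linarith
  then show False
  proof cases
    case 1
    then have "z = x \<or> lt z x"
      using b c iter_strict_mono by (metis le_neq_implies_less less_SucI)
    then show False
      using between lt_irrefl lt_trans x z D_subset by blast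
  next
    case 2
    then show False using between b succ_c lt_irrefl by simp
  next
    case 3
    then have "lt (succ x) z"
      using b succ_c iter_strict_mono by simp
    then show False
      using between lt_irrefl lt_trans x z D_subset succ_in by blast
  qed
qed

end

section \<open>Signs of sequences of faces\<close>

definition face_sign :: "('a \<Rightarrow> 'a) \<Rightarrow> 'a \<Rightarrow> 'a \<Rightarrow> int" where
  "face_sign gam u f = (if f = gam u then 1 else -1)"

lemma fsgn_Suc: "fsgn gam x (Suc k) = fsgn gam x k * face_sign gam (x ! Suc k) (x ! k)"
  by (simp add: face_sign_def)

lemma fsgn_cases: "fsgn gam x k = 1 \<or> fsgn gam x k = -1"
  by (induction k) auto

lemma fsgn_cong: "\<forall>j\<le>k. x ! j = y ! j \<Longrightarrow> fsgn gam x k = fsgn gam y k"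
  by (induction k) auto

lemma fsgn_update_flip:
  assumes "fsgn gam (x[k := v]) (Suc k) = - fsgn gam x (Suc k)" and "Suc k \<le> m"
  shows "fsgn gam (x[k := v]) m = - fsgn gam x m"
  using assms(2)
proof (induction m rule: dec_induct)
  case (step m)
  then show ?case by simp
qed (rule assms(1))

lemma fsgn_const:
  assumes "\<And>i. a \<le> i \<Longrightarrow> i < b \<Longrightarrow> x ! i = gam (x ! Suc i)" and "a \<le> b"
  shows "fsgn gam x b = fsgn gam x a"
  using assms(2)
proof (induction b rule: dec_induct)
  case (step m)
  then show ?case using assms(1) by simp
qed simp

section \<open>Positive opetopic cardinals\<close>

locale opetopic_cardinal =
  fixes S :: "nat \<Rightarrow> 'a set" and gam :: "'a \<Rightarrow> 'a" and del :: "'a \<Rightarrow> 'a set"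
  assumes cardinal: "positive_opetopic_cardinal S gam del"
begin

abbreviation "upper \<equiv> upper_lt S gam del"
abbreviation "lower \<equiv> lower_lt S gam del"
abbreviation "pencil \<equiv> pencil_lt S gam del"
abbreviation "bnd \<equiv> bd gam del"

lemma hypergraph: "positive_hypergraph S gam del"
  using cardinal unfolding positive_opetopic_cardinal_def by (elim conjE)

lemma finite_faces: "finite (S k)"
proof -
  have "\<forall>k. finite (S k)"
    using hypergraph unfolding positive_hypergraph_def by (elim conjE)
  then show ?thesis ..
qed

lemma gam_in_faces: "a \<in> S (Suc k) \<Longrightarrow> gam a \<in> S k"
proof -
  have "\<forall>k. \<forall>a\<in>S (Suc k). gam a \<in> S k"
    using hypergraph unfolding positive_hypergraph_def by (elim conjE)
  then show "a \<in> S (Suc k) \<Longrightarrow> gam a \<in> S k" by blast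
qed

lemma del_in_faces: "a \<in> S (Suc k) \<Longrightarrow> b \<in> del a \<Longrightarrow> b \<in> S k"
proof -
  have "\<forall>k. \<forall>a\<in>S (Suc k). del a \<subseteq> S k \<and> del a \<noteq> {}"
    using hypergraph unfolding positive_hypergraph_def by (elim conjE)
  then show "a \<in> S (Suc k) \<Longrightarrow> b \<in> del a \<Longrightarrow> b \<in> S k" by blast
qed

lemma del_singleton_dim1: "a \<in> S (Suc 0) \<Longrightarrow> \<exists>b. del a = {b}"
proof -
  have "\<forall>a\<in>S 1. \<exists>b. del a = {b}"
    using hypergraph unfolding positive_hypergraph_def by (elim conjE)
  then show "a \<in> S (Suc 0) \<Longrightarrow> \<exists>b. del a = {b}" by simp
qed

lemma bd_in_faces: "a \<in> S (Suc k) \<Longrightarrow> b \<in> bnd a \<Longrightarrow> b \<in> S k"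
  unfolding bd_def using gam_in_faces del_in_faces by blast

lemma globular:
  assumes "a \<in> S (Suc (Suc k))"
  shows "{gam (gam a)} = gam ` del a - \<Union> (del ` del a)"
    and "del (gam a) = \<Union> (del ` del a) - gam ` del a"
proof -
  have "\<forall>k\<ge>2. \<forall>a\<in>S k. {gam (gam a)} = gam ` del a - \<Union> (del ` del a) \<and>
      del (gam a) = \<Union> (del ` del a) - gam ` del a"
    using cardinal unfolding positive_opetopic_cardinal_def by (elim conjE)
  from this[rule_format, of "Suc (Suc k)" a] assms
  have "{gam (gam a)} = gam ` del a - \<Union> (del ` del a) \<and>
      del (gam a) = \<Union> (del ` del a) - gam ` del a"
    by simp
  then show "{gam (gam a)} = gam ` del a - \<Union> (del ` del a)"
    and "del (gam a) = \<Union> (del ` del a) - gam ` del a"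
    by simp_all
qed

lemma upper_in_faces: "upper k a b \<Longrightarrow> a \<in> S k \<and> b \<in> S k"
  unfolding upper_lt_def by (induction rule: trancl_induct) (auto simp: upper_rel_def)

lemma upper_irrefl: "\<not> upper k a a"
proof -
  have "\<forall>k. \<forall>a\<in>S k. \<not> upper_lt S gam del k a a"
    using cardinal unfolding positive_opetopic_cardinal_def by (elim conjE)
  then show ?thesis using upper_in_faces by blast
qed

lemma upper_trans: "upper k a b \<Longrightarrow> upper k b c \<Longrightarrow> upper k a c"
  unfolding upper_lt_def by (rule trancl_trans)

lemma upper_source_target: "\<alpha> \<in> S (Suc k) \<Longrightarrow> a \<in> del \<alpha> \<Longrightarrow> upper k a (gam \<alpha>)"
  unfolding upper_lt_def upper_rel_def using gam_in_faces del_in_faces by blast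

lemma gam_notin_del: "\<alpha> \<in> S (Suc k) \<Longrightarrow> gam \<alpha> \<notin> del \<alpha>"
  using upper_source_target upper_irrefl by blast

lemma lower_upper_incomparable:
  assumes "0 < k" "a \<in> S k" "b \<in> S k" "lower k a b"
  shows "\<not> upper k a b" "\<not> upper k b a"
proof -
  have "\<forall>k>0. \<forall>a\<in>S k. \<forall>b\<in>S k.
      \<not> ((lower_lt S gam del k a b \<or> lower_lt S gam del k b a) \<and>
         (upper_lt S gam del k a b \<or> upper_lt S gam del k b a))"
    using cardinal unfolding positive_opetopic_cardinal_def by (elim conjE)
  then show "\<not> upper k a b" "\<not> upper k b a"
    using assms by blast+
qed

lemma target_fibre_linear:
  assumes "x \<in> S k" "a \<in> S (Suc k)" "b \<in> S (Suc k)" "gam a = x" "gam b = x" "a \<noteq> b"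
  shows "upper (Suc k) a b \<or> upper (Suc k) b a"
proof -
  have "\<forall>k. \<forall>x\<in>S k. \<forall>a\<in>S (Suc k). \<forall>b\<in>S (Suc k).
      gam a = x \<longrightarrow> gam b = x \<longrightarrow> a \<noteq> b \<longrightarrow>
      upper_lt S gam del (Suc k) a b \<or> upper_lt S gam del (Suc k) b a"
    using cardinal unfolding positive_opetopic_cardinal_def by (elim conjE)
  then show ?thesis using assms by blast
qed

lemma source_fibre_linear:
  assumes "x \<in> S k" "a \<in> S (Suc k)" "b \<in> S (Suc k)" "x \<in> del a" "x \<in> del b" "a \<noteq> b"
  shows "upper (Suc k) a b \<or> upper (Suc k) b a"
proof -
  have "\<forall>k. \<forall>x\<in>S k. \<forall>a\<in>S (Suc k). \<forall>b\<in>S (Suc k).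
      x \<in> del a \<longrightarrow> x \<in> del b \<longrightarrow> a \<noteq> b \<longrightarrow>
      upper_lt S gam del (Suc k) a b \<or> upper_lt S gam del (Suc k) b a"
    using cardinal unfolding positive_opetopic_cardinal_def by (elim conjE)
  then show ?thesis using assms by blast
qed

lemma lower_imp_upper_targets: "lower (Suc k) a b \<Longrightarrow> upper k (gam a) (gam b)"
  unfolding lower_lt_def
proof (induction rule: trancl_induct)
  case (base b)
  then show ?case unfolding lower_rel_def using upper_source_target by auto
next
  case (step b c)
  then show ?case unfolding lower_rel_def using upper_source_target upper_trans by blast
qed

lemma lower_irrefl: "\<not> lower (Suc k) a a"
  using lower_imp_upper_targets upper_irrefl by blast

lemma upper_imp_lower_path:
  assumes "upper k a c"
  shows "\<exists>b\<in>S (Suc k). a \<in> del b \<and>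
    (\<exists>b'\<in>S (Suc k). gam b' = c \<and> (b, b') \<in> (lower_rel S gam del (Suc k))\<^sup>*)"
  using assms unfolding upper_lt_def
proof (induction rule: trancl_induct)
  case (base c)
  then show ?case unfolding upper_rel_def by blast
next
  case (step c d)
  from step.IH obtain b b' where b: "b \<in> S (Suc k)" "a \<in> del b"
    and b': "b' \<in> S (Suc k)" "gam b' = c" "(b, b') \<in> (lower_rel S gam del (Suc k))\<^sup>*"
    by blast
  from step.hyps(2) obtain \<beta> where \<beta>: "\<beta> \<in> S (Suc k)" "c \<in> del \<beta>" "gam \<beta> = d"
    unfolding upper_rel_def by blast
  have "(b', \<beta>) \<in> lower_rel S gam del (Suc k)"
    unfolding lower_rel_def using b' \<beta> by auto
  with b' have "(b, \<beta>) \<in> (lower_rel S gam del (Suc k))\<^sup>*" by simp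
  then show ?case using b \<beta> by blast
qed

text \<open>If a were upper-below a', a lower path would run from a face b with source a to \<alpha>;
  but b and \<alpha> share the source a, so they are also upper-comparable.\<close>
lemma sources_upper_incomparable:
  assumes \<alpha>: "\<alpha> \<in> S (Suc (Suc k))" and a: "a \<in> del \<alpha>" and a': "a' \<in> del \<alpha>"
  shows "\<not> upper (Suc k) a a'"
proof
  assume "upper (Suc k) a a'"
  then obtain b b' where b: "b \<in> S (Suc (Suc k))" "a \<in> del b"
    and b': "b' \<in> S (Suc (Suc k))" "gam b' = a'" "(b, b') \<in> (lower_rel S gam del (Suc (Suc k)))\<^sup>*"
    using upper_imp_lower_path by blast
  have "(b', \<alpha>) \<in> lower_rel S gam del (Suc (Suc k))"
    unfolding lower_rel_def using b' \<alpha> a' by auto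
  with b' have lower: "lower (Suc (Suc k)) b \<alpha>"
    unfolding lower_lt_def by simp
  then have "b \<noteq> \<alpha>" using lower_irrefl by blast
  then have "upper (Suc (Suc k)) b \<alpha> \<or> upper (Suc (Suc k)) \<alpha> b"
    using source_fibre_linear del_in_faces \<alpha> a b by blast
  then show False
    using lower_upper_incomparable[OF _ b(1) \<alpha> lower] by simp
qed

lemma sources_eq_if_same_target:
  assumes \<alpha>: "\<alpha> \<in> S (Suc (Suc k))" and "a \<in> del \<alpha>" "a' \<in> del \<alpha>" "gam a = gam a'"
  shows "a = a'"
proof (rule ccontr)
  have "a \<in> S (Suc k)" "a' \<in> S (Suc k)"
    using del_in_faces[OF \<alpha>] assms by auto
  moreover assume "a \<noteq> a'"
  ultimately have "upper (Suc k) a a' \<or> upper (Suc k) a' a"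
    using target_fibre_linear[OF gam_in_faces] assms by metis
  then show False using sources_upper_incomparable[OF \<alpha>] assms by blast
qed

lemma sources_eq_if_common_source:
  assumes \<alpha>: "\<alpha> \<in> S (Suc (Suc k))" and "a \<in> del \<alpha>" "a' \<in> del \<alpha>" "z \<in> del a" "z \<in> del a'"
  shows "a = a'"
proof (rule ccontr)
  have "a \<in> S (Suc k)" "a' \<in> S (Suc k)"
    using del_in_faces[OF \<alpha>] assms by auto
  moreover assume "a \<noteq> a'"
  ultimately have "upper (Suc k) a a' \<or> upper (Suc k) a' a"
    using source_fibre_linear[OF del_in_faces] assms by metis
  then show False using sources_upper_incomparable[OF \<alpha>] assms by blast
qed

lemma target_of_target_iff:
  assumes "\<alpha> \<in> S (Suc (Suc k))"
  shows "f = gam (gam \<alpha>) \<longleftrightarrow> (\<exists>a\<in>del \<alpha>. gam a = f) \<and> \<not> (\<exists>b\<in>del \<alpha>. f \<in> del b)"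
proof -
  have "f = gam (gam \<alpha>) \<longleftrightarrow> f \<in> {gam (gam \<alpha>)}" by simp
  also have "\<dots> \<longleftrightarrow> f \<in> gam ` del \<alpha> - \<Union> (del ` del \<alpha>)"
    unfolding globular(1)[OF assms] ..
  finally show ?thesis by auto
qed

lemma source_of_target_iff:
  assumes "\<alpha> \<in> S (Suc (Suc k))"
  shows "f \<in> del (gam \<alpha>) \<longleftrightarrow> (\<exists>b\<in>del \<alpha>. f \<in> del b) \<and> \<not> (\<exists>a\<in>del \<alpha>. gam a = f)"
  unfolding globular(2)[OF assms] by auto

lemma diamond:
  assumes \<alpha>: "\<alpha> \<in> S (Suc (Suc k))" and u: "u \<in> bnd \<alpha>" and f: "f \<in> bnd u"
  obtains p q where "{w \<in> bnd \<alpha>. f \<in> bnd w} = {p, q}" and "pencil k f p q"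
    and "face_sign gam \<alpha> p * face_sign gam p f = 1" and "face_sign gam \<alpha> q * face_sign gam q f = -1"
proof -
  let ?A = "\<exists>a\<in>del \<alpha>. gam a = f" and ?B = "\<exists>b\<in>del \<alpha>. f \<in> del b"
  have tgt: "gam \<alpha> \<in> S (Suc k)" "gam \<alpha> \<notin> del \<alpha>"
    using gam_in_faces[OF \<alpha>] gam_notin_del[OF \<alpha>] .
  have src: "b \<in> S (Suc k)" "gam b \<notin> del b" "b \<noteq> gam \<alpha>" if "b \<in> del \<alpha>" for b
  proof -
    show "b \<in> S (Suc k)" using del_in_faces[OF \<alpha> that] .
    then show "gam b \<notin> del b" by (rule gam_notin_del)
    show "b \<noteq> gam \<alpha>" using that tgt(2) by blast
  qed
  note TT = target_of_target_iff[OF \<alpha>, of f] and ST = source_of_target_iff[OF \<alpha>, of f]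
  have interval: "{w \<in> bnd \<alpha>. f \<in> bnd w} =
      {w. w = gam \<alpha> \<and> (f = gam (gam \<alpha>) \<or> f \<in> del (gam \<alpha>))} \<union>
      {a \<in> del \<alpha>. gam a = f} \<union> {b \<in> del \<alpha>. f \<in> del b}"
    by (auto simp: bd_def)
  have targets: "{a' \<in> del \<alpha>. gam a' = f} = {a}" if "a \<in> del \<alpha>" "gam a = f" for a
  proof (intro equalityI subsetI)
    fix a' assume "a' \<in> {a' \<in> del \<alpha>. gam a' = f}"
    then show "a' \<in> {a}" using sources_eq_if_same_target[OF \<alpha> _ that(1), of a'] that by simp
  qed (use that in simp)
  have sources: "{b' \<in> del \<alpha>. f \<in> del b'} = {b}" if "b \<in> del \<alpha>" "f \<in> del b" for b
  proof (intro equalityI subsetI)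
    fix b' assume "b' \<in> {b' \<in> del \<alpha>. f \<in> del b'}"
    then show "b' \<in> {b}" using sources_eq_if_common_source[OF \<alpha> _ that(1), of b' f] that by simp
  qed (use that in simp)
  have "?A \<or> ?B"
  proof (cases "u = gam \<alpha>")
    case True
    then have "f = gam (gam \<alpha>) \<or> f \<in> del (gam \<alpha>)"
      using f unfolding bd_def by simp
    then show ?thesis using TT ST by blast
  next
    case False
    then show ?thesis using u f unfolding bd_def by auto
  qed
  then consider (both) a b where "a \<in> del \<alpha>" "gam a = f" "b \<in> del \<alpha>" "f \<in> del b"
    | (target) a where "a \<in> del \<alpha>" "gam a = f" "\<not> ?B"
    | (source) b where "b \<in> del \<alpha>" "f \<in> del b" "\<not> ?A"
    by blast
  then show thesis
  proof cases
    case both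
    have "\<not> (f = gam (gam \<alpha>) \<or> f \<in> del (gam \<alpha>))"
      using TT ST both by blast
    then have "{w \<in> bnd \<alpha>. f \<in> bnd w} = {b, a}"
      unfolding interval targets[OF both(1,2)] sources[OF both(3,4)] by auto
    moreover have "pencil k f b a"
      using both src by (simp add: pencil_lt_def bd_def)
    moreover have "f \<noteq> gam b"
      using both src by blast
    ultimately show thesis
      using that both src by (simp add: face_sign_def)
  next
    case target
    have f: "f = gam (gam \<alpha>)"
      using TT target by blast
    have "{b' \<in> del \<alpha>. f \<in> del b'} = {}"
      using target by blast
    then have "{w \<in> bnd \<alpha>. f \<in> bnd w} = {gam \<alpha>, a}"
      unfolding interval targets[OF target(1,2)] using TT target by auto
    moreover have "pencil k f (gam \<alpha>) a"
      using target f src tgt upper_source_target[OF \<alpha> target(1)]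
      by (simp add: pencil_lt_def bd_def)
    ultimately show thesis
      using that target f src by (simp add: face_sign_def)
  next
    case source
    have f: "f \<in> del (gam \<alpha>)"
      using ST source by blast
    have "{a' \<in> del \<alpha>. gam a' = f} = {}"
      using source by blast
    then have "{w \<in> bnd \<alpha>. f \<in> bnd w} = {b, gam \<alpha>}"
      unfolding interval sources[OF source(1,2)] using ST source by auto
    moreover have "pencil k f b (gam \<alpha>)"
      using source f src tgt upper_source_target[OF \<alpha> source(1)]
      by (simp add: pencil_lt_def bd_def)
    moreover have "f \<noteq> gam b" "f \<noteq> gam (gam \<alpha>)"
      using source src f gam_notin_del[OF tgt(1)] by blast+
    ultimately show thesis
      using that source src by (simp add: face_sign_def)
  qed
qed

section \<open>The order on maximal flags\<close>

lemma pencil_in_faces: "pencil k f a b \<Longrightarrow> a \<in> S (Suc k) \<and> b \<in> S (Suc k)"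
  unfolding pencil_lt_def by blast

lemma pencil_irrefl: "\<not> pencil k f a a"
proof
  assume "pencil k f a a"
  then have "a \<in> S (Suc k)" "(gam a = f \<and> f \<in> del a) \<or> upper (Suc k) a a"
    unfolding pencil_lt_def by auto
  then show False using gam_notin_del upper_irrefl by blast
qed

lemma pencil_trans:
  assumes ab: "pencil k f a b" and bc: "pencil k f b c"
  shows "pencil k f a c"
proof -
  have "b \<in> S (Suc k)" using pencil_in_faces ab by blast
  then have b: "\<not> (gam b = f \<and> f \<in> del b)" using gam_notin_del by blast
  consider (i) "gam b = f" "f \<in> del a" | (ii) "f \<in> del a" "f \<in> del b" "upper (Suc k) a b"
    | (iii) "gam a = f" "gam b = f" "upper (Suc k) b a"
    using ab unfolding pencil_lt_def by blast
  then have "(gam c = f \<and> f \<in> del a) \<or> (f \<in> del a \<and> f \<in> del c \<and> upper (Suc k) a c) \<or>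
      (gam a = f \<and> gam c = f \<and> upper (Suc k) c a)"
  proof cases
    case i
    then show ?thesis using bc b unfolding pencil_lt_def by blast
  next
    case ii
    then show ?thesis using bc b upper_trans unfolding pencil_lt_def by blast
  next
    case iii
    then show ?thesis using bc b upper_trans unfolding pencil_lt_def by blast
  qed
  then show ?thesis using ab bc unfolding pencil_lt_def by blast
qed

text \<open>flag_lt x y, for flags first differing at position k, compares a = x ! k with b = y ! k.\<close>
definition flag_less_at :: "nat \<Rightarrow> 'a list \<Rightarrow> 'a \<Rightarrow> 'a \<Rightarrow> bool" where
  "flag_less_at k x a b \<longleftrightarrow>
     (if k = 0 then upper 0 b a
      else if fsgn gam x (k - 1) = 1 then pencil (k - 1) (x ! (k - 1)) a b
      else pencil (k - 1) (x ! (k - 1)) b a)"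

lemma flag_less_at_irrefl: "\<not> flag_less_at k x a a"
  unfolding flag_less_at_def using upper_irrefl pencil_irrefl by simp

lemma flag_less_at_trans:
  assumes "flag_less_at k x a b" and "flag_less_at k x b c"
  shows "flag_less_at k x a c"
proof -
  consider "k = 0" | "k \<noteq> 0" "fsgn gam x (k - 1) = 1" | "k \<noteq> 0" "fsgn gam x (k - 1) \<noteq> 1"
    by blast
  then show ?thesis
  proof cases
    case 1
    with assms have "upper 0 c b" "upper 0 b a" unfolding flag_less_at_def by simp_all
    then have "upper 0 c a" by (rule upper_trans)
    with 1 show ?thesis unfolding flag_less_at_def by simp
  next
    case 2
    with assms have "pencil (k - 1) (x ! (k - 1)) a b" "pencil (k - 1) (x ! (k - 1)) b c"
      unfolding flag_less_at_def by simp_all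
    then have "pencil (k - 1) (x ! (k - 1)) a c" by (rule pencil_trans)
    with 2 show ?thesis unfolding flag_less_at_def by simp
  next
    case 3
    with assms have "pencil (k - 1) (x ! (k - 1)) c b" "pencil (k - 1) (x ! (k - 1)) b a"
      unfolding flag_less_at_def by simp_all
    then have "pencil (k - 1) (x ! (k - 1)) c a" by (rule pencil_trans)
    with 3 show ?thesis unfolding flag_less_at_def by simp
  qed
qed

lemma flag_less_at_cong:
  assumes "\<forall>j<k. x ! j = y ! j"
  shows "flag_less_at k x a b = flag_less_at k y a b"
proof (cases k)
  case (Suc K)
  with assms have "fsgn gam x K = fsgn gam y K" by (intro fsgn_cong) auto
  with Suc assms show ?thesis unfolding flag_less_at_def by simp
qed (simp add: flag_less_at_def)

lemma flag_lt_iff_flag_less_at: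
  assumes "length x = length y" "k < length x" "x ! k \<noteq> y ! k" "\<forall>j<k. x ! j = y ! j"
  shows "flag_lt S gam del x y \<longleftrightarrow> flag_less_at k x (x ! k) (y ! k)"
proof -
  have "(LEAST j. x ! j \<noteq> y ! j) = k"
    using assms(3,4) by (intro Least_equality) (auto simp: not_le[symmetric])
  moreover have "x \<noteq> y" using assms(3) by auto
  ultimately show ?thesis
    using fsgn_cases[of gam x "k - 1"] by (auto simp: flag_lt_def flag_less_at_def Let_def)
qed

lemma first_difference:
  assumes "length x = length y" "x \<noteq> y"
  obtains k where "k < length x" "x ! k \<noteq> y ! k" "\<forall>j<k. x ! j = y ! j"
proof -
  have "\<exists>k. k < length x \<and> x ! k \<noteq> y ! k" using assms nth_equalityI by blast
  from exists_least_iff[THEN iffD1, OF this] obtain k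
    where "k < length x \<and> x ! k \<noteq> y ! k" "\<forall>j<k. \<not> (j < length x \<and> x ! j \<noteq> y ! j)"
    by blast
  then show thesis by (intro that) auto
qed

lemma flag_lt_trans:
  assumes len: "length x = length y" "length y = length z"
    and xy: "flag_lt S gam del x y" and yz: "flag_lt S gam del y z"
  shows "flag_lt S gam del x z"
proof -
  have "x \<noteq> y" "y \<noteq> z" using xy yz unfolding flag_lt_def by auto
  obtain k where k: "k < length x" "x ! k \<noteq> y ! k" "\<forall>j<k. x ! j = y ! j"
    using first_difference[OF len(1) \<open>x \<noteq> y\<close>] by blast
  obtain l where l: "l < length y" "y ! l \<noteq> z ! l" "\<forall>j<l. y ! j = z ! j"
    using first_difference[OF len(2) \<open>y \<noteq> z\<close>] by blast
  have xy_at: "flag_less_at k x (x ! k) (y ! k)"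
    using flag_lt_iff_flag_less_at[OF len(1) k] xy by simp
  have yz_at: "flag_less_at l y (y ! l) (z ! l)"
    using flag_lt_iff_flag_less_at[OF len(2) l] yz by simp
  have lxz: "length x = length z" using len by simp
  consider "k < l" | "l < k" | "k = l" by linarith
  then show ?thesis
  proof cases
    case 1
    then show ?thesis
      using flag_lt_iff_flag_less_at[OF lxz k(1)] k l xy_at by auto
  next
    case 2
    then have "x ! l = y ! l" "\<forall>j<l. x ! j = z ! j"
      using k(3) l(3) by auto
    moreover have "flag_less_at l x (x ! l) (z ! l)"
      using yz_at flag_less_at_cong[of l x y] k(3) 2 \<open>x ! l = y ! l\<close> by simp
    ultimately show ?thesis
      using flag_lt_iff_flag_less_at[OF lxz _ _ \<open>\<forall>j<l. x ! j = z ! j\<close>] l len by auto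
  next
    case 3
    then have "flag_less_at k x (x ! k) (z ! k)"
      using flag_less_at_trans[OF xy_at] yz_at flag_less_at_cong[of k x y] k(3) by simp
    moreover from this have "x ! k \<noteq> z ! k"
      using flag_less_at_irrefl by metis
    ultimately show ?thesis
      using flag_lt_iff_flag_less_at[OF lxz k(1)] k l 3 by auto
  qed
qed

end

section \<open>Neighbours of maximal flags\<close>

locale opetopic_flags = opetopic_cardinal +
  fixes n :: nat
begin

abbreviation "flags \<equiv> max_flags S gam del n"

lemma flags_length: "x \<in> flags \<Longrightarrow> length x = Suc n"
  unfolding max_flags_def by simp

lemma flags_top: "x \<in> flags \<Longrightarrow> x ! n = top_face S n"
  unfolding max_flags_def by simp

lemma flags_faces: "x \<in> flags \<Longrightarrow> i \<le> n \<Longrightarrow> x ! i \<in> S i"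
  unfolding max_flags_def by simp

lemma flags_bd: "x \<in> flags \<Longrightarrow> i < n \<Longrightarrow> x ! i \<in> bnd (x ! Suc i)"
  unfolding max_flags_def by simp

lemma finite_flags: "finite flags"
proof (rule finite_subset)
  show "flags \<subseteq> {xs. set xs \<subseteq> (\<Union>i\<le>n. S i) \<and> length xs = Suc n}"
    using flags_faces flags_length by (fastforce simp: in_set_conv_nth less_Suc_eq_le)
  show "finite {xs. set xs \<subseteq> (\<Union>i\<le>n. S i) \<and> length xs = Suc n}"
    by (intro finite_lists_length_eq) (simp add: finite_faces)
qed

definition fits_at :: "nat \<Rightarrow> 'a list \<Rightarrow> 'a \<Rightarrow> bool" where
  "fits_at k x v \<longleftrightarrow> v \<in> bnd (x ! Suc k) \<and> (k = 0 \<or> x ! (k - 1) \<in> bnd v)"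

lemma update_in_flags:
  assumes x: "x \<in> flags" and k: "k < n" and v: "fits_at k x v"
  shows "x[k := v] \<in> flags"
proof -
  have len: "length x = Suc n" using flags_length x .
  have "v \<in> S k"
    using bd_in_faces[OF flags_faces[OF x] ] v k unfolding fits_at_def by (simp add: Suc_le_eq)
  then show ?thesis
    using x k v len unfolding max_flags_def fits_at_def
    by (auto simp: nth_list_update)
qed

lemma is_neighbour_iff:
  assumes x: "x \<in> flags" and k: "k < n"
  shows "is_neighbour S gam del n k x z \<longleftrightarrow> (\<exists>v. v \<noteq> x ! k \<and> fits_at k x v \<and> z = x[k := v])"
proof
  assume z: "is_neighbour S gam del n k x z"
  then have zF: "z \<in> flags" and agree: "\<forall>i\<le>n. i \<noteq> k \<longrightarrow> z ! i = x ! i"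
    unfolding is_neighbour_def by auto
  have upd: "z = x[k := z ! k]"
    using agree flags_length[OF x] flags_length[OF zF] k
    by (intro nth_equalityI) (auto simp: nth_list_update)
  moreover have "z ! k \<noteq> x ! k"
    using upd z unfolding is_neighbour_def by force
  moreover have "fits_at k x (z ! k)"
  proof -
    have "z ! k \<in> bnd (z ! Suc k)" "z ! Suc k = x ! Suc k"
      using flags_bd[OF zF k] agree k by auto
    moreover have "x ! (k - 1) \<in> bnd (z ! k)" if "k > 0"
      using flags_bd[OF zF, of "k - 1"] agree k that by simp
    ultimately show ?thesis unfolding fits_at_def by auto
  qed
  ultimately show "\<exists>v. v \<noteq> x ! k \<and> fits_at k x v \<and> z = x[k := v]" by blast
next
  assume "\<exists>v. v \<noteq> x ! k \<and> fits_at k x v \<and> z = x[k := v]"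
  then obtain v where v: "v \<noteq> x ! k" "fits_at k x v" "z = x[k := v]" by blast
  moreover have "z ! k = v"
    using v(3) flags_length[OF x] k by simp
  ultimately show "is_neighbour S gam del n k x z"
    using update_in_flags[OF x k] unfolding is_neighbour_def by auto
qed

lemma exchange_at_0:
  assumes x: "x \<in> flags" and n: "0 < n"
  obtains v where "{w. w \<noteq> x ! 0 \<and> fits_at 0 x w} = {v}"
    and "fsgn gam (x[0 := v]) (Suc 0) = - fsgn gam x (Suc 0)"
    and "fsgn gam x (Suc 0) = 1 \<longrightarrow> flag_less_at 0 x (x ! 0) v"
proof -
  have \<alpha>: "x ! Suc 0 \<in> S (Suc 0)" using flags_faces[OF x, of "Suc 0"] n by simp
  obtain s where s: "del (x ! Suc 0) = {s}" using del_singleton_dim1[OF \<alpha>] by blast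
  define g where "g = gam (x ! Suc 0)"
  have faces: "bnd (x ! Suc 0) = {g, s}" and "g \<noteq> s" and "upper 0 s g"
    using s gam_notin_del[OF \<alpha>] upper_source_target[OF \<alpha>, of s] by (auto simp: bd_def g_def)
  have fits: "fits_at 0 x w \<longleftrightarrow> w = g \<or> w = s" for w
    unfolding fits_at_def faces by simp
  have "x ! 0 = g \<or> x ! 0 = s" using fits flags_bd[OF x n] unfolding fits_at_def by blast
  have sign: "fsgn gam (x[0 := w]) (Suc 0) = face_sign gam (x ! Suc 0) w" for w
    using flags_length[OF x] by (simp add: face_sign_def)
  have sign_x: "fsgn gam x (Suc 0) = face_sign gam (x ! Suc 0) (x ! 0)"
    by (simp add: face_sign_def)
  show thesis
  proof (cases "x ! 0 = g")
    case True
    have "{w. w \<noteq> x ! 0 \<and> fits_at 0 x w} = {s}"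
      using fits True \<open>g \<noteq> s\<close> by auto
    moreover have "fsgn gam (x[0 := s]) (Suc 0) = - fsgn gam x (Suc 0)"
      using sign sign_x True \<open>g \<noteq> s\<close> by (simp add: face_sign_def g_def)
    moreover have "flag_less_at 0 x (x ! 0) s"
      using True \<open>upper 0 s g\<close> by (simp add: flag_less_at_def)
    ultimately show thesis using that by blast
  next
    case False
    then have "x ! 0 = s" using \<open>x ! 0 = g \<or> x ! 0 = s\<close> by blast
    have "{w. w \<noteq> x ! 0 \<and> fits_at 0 x w} = {g}"
      using fits \<open>x ! 0 = s\<close> \<open>g \<noteq> s\<close> by auto
    moreover have "fsgn gam (x[0 := g]) (Suc 0) = - fsgn gam x (Suc 0)"
      using sign sign_x False by (simp add: face_sign_def g_def)
    moreover have "fsgn gam x (Suc 0) \<noteq> 1"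
      using sign_x False by (simp add: face_sign_def g_def)
    ultimately show thesis using that by blast
  qed
qed

lemma exchange_at_Suc:
  assumes x: "x \<in> flags" and k: "Suc k < n"
  obtains v where "{w. w \<noteq> x ! Suc k \<and> fits_at (Suc k) x w} = {v}"
    and "fsgn gam (x[Suc k := v]) (Suc (Suc k)) = - fsgn gam x (Suc (Suc k))"
    and "fsgn gam x (Suc (Suc k)) = 1 \<longrightarrow> flag_less_at (Suc k) x (x ! Suc k) v"
proof -
  let ?\<alpha> = "x ! Suc (Suc k)" and ?u = "x ! Suc k" and ?f = "x ! k"
  let ?sign = "\<lambda>w. face_sign gam ?\<alpha> w * face_sign gam w ?f"
  have \<alpha>: "?\<alpha> \<in> S (Suc (Suc k))" using flags_faces[OF x] k by simp
  have u: "?u \<in> bnd ?\<alpha>" and f: "?f \<in> bnd ?u" using flags_bd[OF x] k by simp_all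
  obtain p q where pq: "{w \<in> bnd ?\<alpha>. ?f \<in> bnd w} = {p, q}" "pencil k ?f p q"
    "?sign p = 1" "?sign q = -1"
    using diamond[OF \<alpha> u f] by blast
  have fits: "fits_at (Suc k) x w \<longleftrightarrow> w = p \<or> w = q" for w
    using pq(1) unfolding fits_at_def set_eq_iff by auto
  have "p \<noteq> q" using pq(2) pencil_irrefl by blast
  have "fits_at (Suc k) x ?u" unfolding fits_at_def using u f by simp
  then have u_pq: "?u = p \<or> ?u = q" using fits by blast
  define v where "v = (if ?u = p then q else p)"
  have candidates: "{w. w \<noteq> ?u \<and> fits_at (Suc k) x w} = {v}"
    using fits u_pq \<open>p \<noteq> q\<close> unfolding v_def by auto
  have "fsgn gam (x[Suc k := v]) k = fsgn gam x k"
    by (rule fsgn_cong) simp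
  then have sign_v: "fsgn gam (x[Suc k := v]) (Suc (Suc k)) = fsgn gam x k * ?sign v"
    using flags_length[OF x] k by (simp add: fsgn_Suc del: fsgn.simps)
  have sign_u: "fsgn gam x (Suc (Suc k)) = fsgn gam x k * ?sign ?u"
    by (simp add: fsgn_Suc del: fsgn.simps)
  have flip: "?sign v = - ?sign ?u"
    using u_pq pq(3,4) unfolding v_def by auto
  have "flag_less_at (Suc k) x ?u v" if "fsgn gam x (Suc (Suc k)) = 1"
  proof (cases "fsgn gam x k = 1")
    case True
    then have "?u = p" using that sign_u u_pq pq(4) by auto
    then show ?thesis using True pq(2) unfolding v_def flag_less_at_def by simp
  next
    case False
    then have "fsgn gam x k = -1" using fsgn_cases by blast
    then have "?u = q" using that sign_u u_pq pq(3) by auto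
    then show ?thesis using False pq(2) \<open>p \<noteq> q\<close> unfolding v_def flag_less_at_def by simp
  qed
  then show thesis
    using that[OF candidates] sign_v sign_u flip by simp
qed

lemma exchange:
  assumes x: "x \<in> flags" and k: "k < n"
  obtains v where "{w. w \<noteq> x ! k \<and> fits_at k x w} = {v}"
    and "fsgn gam (x[k := v]) (Suc k) = - fsgn gam x (Suc k)"
    and "fsgn gam x (Suc k) = 1 \<longrightarrow> flag_less_at k x (x ! k) v"
proof (cases k)
  case 0
  then show thesis using exchange_at_0[OF x] k that by auto
next
  case (Suc K)
  then show thesis using exchange_at_Suc[OF x] k that by auto
qed

definition neighbour :: "nat \<Rightarrow> 'a list \<Rightarrow> 'a list" where
  "neighbour k x = (THE y. is_neighbour S gam del n k x y)"

lemma is_neighbour_iff_eq: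
  assumes x: "x \<in> flags" and k: "k < n"
  shows "is_neighbour S gam del n k x y \<longleftrightarrow> y = neighbour k x"
proof -
  obtain v where "{w. w \<noteq> x ! k \<and> fits_at k x w} = {v}"
    and "fsgn gam (x[k := v]) (Suc k) = - fsgn gam x (Suc k)"
    and "fsgn gam x (Suc k) = 1 \<longrightarrow> flag_less_at k x (x ! k) v"
    by (rule exchange[OF x k])
  then have eqv: "w \<noteq> x ! k \<and> fits_at k x w \<longleftrightarrow> w = v" for w
    by (simp add: set_eq_iff)
  have "is_neighbour S gam del n k x z \<longleftrightarrow> z = x[k := v]" for z
  proof
    assume "is_neighbour S gam del n k x z"
    then obtain w where "w \<noteq> x ! k \<and> fits_at k x w" "z = x[k := w]"
      unfolding is_neighbour_iff[OF x k] by blast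
    then show "z = x[k := v]" using eqv by simp
  next
    assume "z = x[k := v]"
    moreover have "v \<noteq> x ! k \<and> fits_at k x v" using eqv by simp
    ultimately show "is_neighbour S gam del n k x z"
      unfolding is_neighbour_iff[OF x k] by blast
  qed
  then have "is_neighbour S gam del n k x = (\<lambda>z. z = x[k := v])" by blast
  then show ?thesis unfolding neighbour_def by simp
qed

lemma neighbour_exchange:
  assumes x: "x \<in> flags" and k: "k < n"
  obtains v where "neighbour k x = x[k := v]" and "v \<noteq> x ! k"
    and "fsgn gam (x[k := v]) (Suc k) = - fsgn gam x (Suc k)"
    and "fsgn gam x (Suc k) = 1 \<longrightarrow> flag_less_at k x (x ! k) v"
proof -
  obtain v where v: "{w. w \<noteq> x ! k \<and> fits_at k x w} = {v}"
    "fsgn gam (x[k := v]) (Suc k) = - fsgn gam x (Suc k)"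
    "fsgn gam x (Suc k) = 1 \<longrightarrow> flag_less_at k x (x ! k) v"
    by (rule exchange[OF x k])
  then have "v \<noteq> x ! k \<and> fits_at k x v"
    by (simp add: set_eq_iff)
  then have "is_neighbour S gam del n k x (x[k := v])"
    unfolding is_neighbour_iff[OF x k] by blast
  then have "neighbour k x = x[k := v]"
    using is_neighbour_iff_eq[OF x k] by simp
  then show thesis
    using that \<open>v \<noteq> x ! k \<and> fits_at k x v\<close> v(2,3) by blast
qed

lemma neighbour_in_flags: "x \<in> flags \<Longrightarrow> k < n \<Longrightarrow> neighbour k x \<in> flags"
  using is_neighbour_iff_eq unfolding is_neighbour_def by blast

lemma neighbour_nth:
  assumes "x \<in> flags" "k < n" "i \<noteq> k"
  shows "neighbour k x ! i = x ! i"
proof -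
  obtain v where "neighbour k x = x[k := v]" and "v \<noteq> x ! k"
    and "fsgn gam (x[k := v]) (Suc k) = - fsgn gam x (Suc k)"
    and "fsgn gam x (Suc k) = 1 \<longrightarrow> flag_less_at k x (x ! k) v"
    by (rule neighbour_exchange[OF assms(1,2)])
  then show ?thesis using assms(3) by simp
qed

lemma neighbour_neighbour:
  assumes x: "x \<in> flags" and k: "k < n"
  shows "neighbour k (neighbour k x) = x"
proof -
  have "is_neighbour S gam del n k (neighbour k x) x"
    using is_neighbour_iff_eq[OF x k, of "neighbour k x"] x unfolding is_neighbour_def by auto
  then show ?thesis
    using is_neighbour_iff_eq[OF neighbour_in_flags[OF x k] k] by simp
qed

lemma fsgn_neighbour:
  assumes "x \<in> flags" "k < n"
  shows "fsgn gam (neighbour k x) n = - fsgn gam x n"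
proof -
  obtain v where "neighbour k x = x[k := v]" and "v \<noteq> x ! k"
    and "fsgn gam (x[k := v]) (Suc k) = - fsgn gam x (Suc k)"
    and "fsgn gam x (Suc k) = 1 \<longrightarrow> flag_less_at k x (x ! k) v"
    by (rule neighbour_exchange[OF assms])
  then show ?thesis using fsgn_update_flip[of gam x k v n] assms(2) by simp
qed

lemma less_neighbour:
  assumes x: "x \<in> flags" and k: "k < n" and sign: "fsgn gam x (Suc k) = 1"
  shows "flag_lt S gam del x (neighbour k x)"
proof -
  obtain v where "neighbour k x = x[k := v]" and "v \<noteq> x ! k"
    and "fsgn gam (x[k := v]) (Suc k) = - fsgn gam x (Suc k)"
    and "fsgn gam x (Suc k) = 1 \<longrightarrow> flag_less_at k x (x ! k) v"
    by (rule neighbour_exchange[OF x k])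
  moreover have "k < length x" using flags_length[OF x] k by simp
  ultimately show ?thesis
    using flag_lt_iff_flag_less_at[of x "x[k := v]" k] sign by simp
qed

section \<open>Successor and predecessor\<close>

definition low_levels :: "'a list \<Rightarrow> nat set" where
  "low_levels x = {i. i < n - 1 \<and> x ! Suc i \<in> del (x ! Suc (Suc i))}"

lemma low_level_eq_Max: "low_level del n x = Max (low_levels x)"
  unfolding low_level_def low_levels_def ..

lemma finite_low_levels: "finite (low_levels x)"
  unfolding low_levels_def by (rule finite_subset[of _ "{..<n - 1}"]) auto

lemma Max_low_levels:
  assumes "low_levels x \<noteq> {}"
  shows "Max (low_levels x) < n - 1"
    and "x ! Suc (Max (low_levels x)) \<in> del (x ! Suc (Suc (Max (low_levels x))))"
  using Max_in[OF finite_low_levels assms] unfolding low_levels_def by auto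

lemma gam_above_low_levels:
  assumes x: "x \<in> flags" and i: "0 < i" "i < n" and above: "\<forall>j\<in>low_levels x. Suc j < i"
  shows "x ! i = gam (x ! Suc i)"
proof -
  have "x ! i \<notin> del (x ! Suc i)"
  proof
    assume "x ! i \<in> del (x ! Suc i)"
    then have "i - 1 \<in> low_levels x" using i unfolding low_levels_def by simp
    then show False using above i by fastforce
  qed
  then show ?thesis using flags_bd[OF x i(2)] unfolding bd_def by simp
qed

lemma fsgn_above_low_level:
  assumes x: "x \<in> flags" and L: "low_levels x \<noteq> {}"
  shows "fsgn gam x (Suc (Max (low_levels x))) = - fsgn gam x n"
proof -
  let ?l = "Max (low_levels x)"
  have l: "?l < n - 1" "x ! Suc ?l \<in> del (x ! Suc (Suc ?l))"
    using Max_low_levels[OF L] by auto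
  have "x ! Suc ?l \<noteq> gam (x ! Suc (Suc ?l))"
    using l(2) gam_notin_del[OF flags_faces[OF x, of "Suc (Suc ?l)"]] l(1) by auto
  then have "fsgn gam x (Suc (Suc ?l)) = - fsgn gam x (Suc ?l)" by simp
  moreover have "fsgn gam x n = fsgn gam x (Suc (Suc ?l))"
  proof (rule fsgn_const)
    fix i assume i: "Suc (Suc ?l) \<le> i" "i < n"
    have "\<forall>j\<in>low_levels x. Suc j < i"
    proof
      fix j assume "j \<in> low_levels x"
      then have "j \<le> ?l" by (rule Max_ge[OF finite_low_levels])
      with i show "Suc j < i" by simp
    qed
    then show "x ! i = gam (x ! Suc i)"
      using gam_above_low_levels[OF x _ i(2)] i(1) by simp
  qed (use l in simp)
  ultimately show ?thesis by simp
qed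

lemma Max_low_levels_update:
  assumes L: "low_levels x \<noteq> {}" and agree: "\<forall>i. i \<noteq> Max (low_levels x) \<longrightarrow> y ! i = x ! i"
  shows "low_levels y \<noteq> {}" and "Max (low_levels y) = Max (low_levels x)"
proof -
  let ?l = "Max (low_levels x)"
  have "?l \<in> low_levels y"
    using Max_low_levels[OF L] agree unfolding low_levels_def by auto
  moreover have "i \<le> ?l" if "i \<in> low_levels y" for i
  proof (rule ccontr)
    assume "\<not> i \<le> ?l"
    then have "i \<in> low_levels x" using that agree unfolding low_levels_def by auto
    then show False using Max_ge[OF finite_low_levels] \<open>\<not> i \<le> ?l\<close> by blast
  qed
  ultimately show "low_levels y \<noteq> {}" "Max (low_levels y) = ?l"
    by (auto intro: Max_eqI[OF finite_low_levels])
qed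

text \<open>The high neighbour is the one at level n - 1, the low neighbour the one at the low level.
  For n = 0 there are no neighbours at all, hence the conjunct 0 < n.\<close>
definition succ_level :: "'a list \<Rightarrow> nat" where
  "succ_level x = (if fsgn gam x n = 1 then n - 1 else Max (low_levels x))"

definition pred_level :: "'a list \<Rightarrow> nat" where
  "pred_level x = (if fsgn gam x n = 1 then Max (low_levels x) else n - 1)"

definition has_succ :: "'a list \<Rightarrow> bool" where
  "has_succ x \<longleftrightarrow> 0 < n \<and> (fsgn gam x n = 1 \<or> low_levels x \<noteq> {})"

definition has_pred :: "'a list \<Rightarrow> bool" where
  "has_pred x \<longleftrightarrow> 0 < n \<and> (fsgn gam x n \<noteq> 1 \<or> low_levels x \<noteq> {})"

definition flag_succ :: "'a list \<Rightarrow> 'a list" where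
  "flag_succ x = neighbour (succ_level x) x"

definition flag_pred :: "'a list \<Rightarrow> 'a list" where
  "flag_pred x = neighbour (pred_level x) x"

lemma succ_level_less:
  assumes "has_succ x"
  shows "succ_level x < n"
proof (cases "fsgn gam x n = 1")
  case False
  then have "low_levels x \<noteq> {}" using assms unfolding has_succ_def by simp
  then show ?thesis using Max_low_levels(1) False unfolding succ_level_def by fastforce
qed (use assms in \<open>simp add: has_succ_def succ_level_def\<close>)

lemma pred_level_less:
  assumes "has_pred x"
  shows "pred_level x < n"
proof (cases "fsgn gam x n = 1")
  case True
  then have "low_levels x \<noteq> {}" using assms unfolding has_pred_def by simp
  then show ?thesis using Max_low_levels(1) True unfolding pred_level_def by fastforce
qed (use assms in \<open>simp add: has_pred_def pred_level_def\<close>)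

lemma flag_succ_in_flags: "x \<in> flags \<Longrightarrow> has_succ x \<Longrightarrow> flag_succ x \<in> flags"
  unfolding flag_succ_def using neighbour_in_flags succ_level_less by blast

lemma flag_pred_in_flags: "x \<in> flags \<Longrightarrow> has_pred x \<Longrightarrow> flag_pred x \<in> flags"
  unfolding flag_pred_def using neighbour_in_flags pred_level_less by blast

lemma less_flag_succ:
  assumes x: "x \<in> flags" and succ: "has_succ x"
  shows "flag_lt S gam del x (flag_succ x)"
proof -
  have "fsgn gam x (Suc (succ_level x)) = 1"
  proof (cases "fsgn gam x n = 1")
    case True
    then show ?thesis using succ unfolding has_succ_def succ_level_def by simp
  next
    case False
    then have "fsgn gam x n = -1" "low_levels x \<noteq> {}"
      using fsgn_cases succ unfolding has_succ_def by blast+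
    then show ?thesis
      using fsgn_above_low_level[OF x] unfolding succ_level_def by simp
  qed
  then show ?thesis
    unfolding flag_succ_def using less_neighbour[OF x succ_level_less[OF succ]] by blast
qed

lemma flag_succ_flag_pred:
  assumes y: "y \<in> flags" and pred: "has_pred y"
  shows "has_succ (flag_pred y)" and "flag_succ (flag_pred y) = y"
proof -
  let ?l = "pred_level y" and ?x = "flag_pred y"
  have l: "?l < n" using pred_level_less[OF pred] .
  have sign: "fsgn gam ?x n = - fsgn gam y n"
    unfolding flag_pred_def using fsgn_neighbour[OF y l] .
  have "has_succ ?x \<and> succ_level ?x = ?l"
  proof (cases "fsgn gam y n = 1")
    case True
    then have L: "low_levels y \<noteq> {}" and l_eq: "?l = Max (low_levels y)"
      using pred unfolding has_pred_def pred_level_def by auto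
    have "\<forall>i. i \<noteq> Max (low_levels y) \<longrightarrow> ?x ! i = y ! i"
      unfolding flag_pred_def l_eq using neighbour_nth[OF y] l l_eq by auto
    from Max_low_levels_update[OF L this] show ?thesis
      using True sign pred l_eq unfolding has_succ_def has_pred_def succ_level_def by simp
  next
    case False
    then have "fsgn gam ?x n = 1" using sign fsgn_cases by force
    then show ?thesis
      using False pred unfolding has_succ_def has_pred_def succ_level_def pred_level_def by simp
  qed
  then show "has_succ ?x" and "flag_succ ?x = y"
    unfolding flag_succ_def using neighbour_neighbour[OF y l] by (simp_all add: flag_pred_def)
qed

lemma gam_chain_if_no_pred:
  assumes y: "y \<in> flags" and no_pred: "\<not> has_pred y" and i: "i < n"
  shows "y ! i = gam (y ! Suc i)"
proof -
  have sign: "fsgn gam y n = 1" and L: "low_levels y = {}"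
    using no_pred i unfolding has_pred_def by auto
  have above: "y ! j = gam (y ! Suc j)" if "0 < j" "j < n" for j
    using gam_above_low_levels[OF y that] L by simp
  show ?thesis
  proof (cases "i = 0")
    case True
    have "fsgn gam y n = fsgn gam y (Suc 0)"
      by (rule fsgn_const) (use above i in auto)
    then show ?thesis using sign True by (simp split: if_splits)
  qed (use above i in simp)
qed

lemma flag_without_pred_unique:
  assumes y: "y \<in> flags" "\<not> has_pred y" and y': "y' \<in> flags" "\<not> has_pred y'"
  shows "y = y'"
proof -
  have eq: "y ! (n - d) = y' ! (n - d)" if "d \<le> n" for d
    using that
  proof (induction d)
    case 0
    show ?case using flags_top y y' by simp
  next
    case (Suc d)
    then have i: "n - Suc d < n" and "Suc (n - Suc d) = n - d" by auto
    then show ?case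
      using gam_chain_if_no_pred[OF y i] gam_chain_if_no_pred[OF y' i] Suc by simp
  qed
  show ?thesis
  proof (rule nth_equalityI)
    show "length y = length y'" using flags_length y y' by simp
    fix i assume "i < length y"
    then have "n - (n - i) = i" using flags_length[OF y(1)] by simp
    then show "y ! i = y' ! i" using eq[of "n - i"] by simp
  qed
qed

sublocale flag_chain: succ_chain flags "flag_lt S gam del" "{x \<in> flags. has_succ x}" flag_succ
proof unfold_locales
  show "finite flags" by (rule finite_flags)
  show "\<not> flag_lt S gam del x x" for x
    unfolding flag_lt_def by simp
  show "flag_lt S gam del x z"
    if "x \<in> flags" "y \<in> flags" "z \<in> flags" "flag_lt S gam del x y" "flag_lt S gam del y z" for x y z
    using flag_lt_trans[OF _ _ that(4,5)] flags_length that(1-3) by simp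
  show "{x \<in> flags. has_succ x} \<subseteq> flags" by blast
  show "flag_succ x \<in> flags" if "x \<in> {x \<in> flags. has_succ x}" for x
    using flag_succ_in_flags that by blast
  show "flag_lt S gam del x (flag_succ x)" if "x \<in> {x \<in> flags. has_succ x}" for x
    using less_flag_succ that by blast
  have no_pred: "\<not> has_pred y" if "y \<in> flags - flag_succ ` {x \<in> flags. has_succ x}" for y
  proof
    assume pred: "has_pred y"
    have y: "y \<in> flags" using that by blast
    have "flag_pred y \<in> {x \<in> flags. has_succ x}"
      using flag_pred_in_flags[OF y pred] flag_succ_flag_pred(1)[OF y pred] by blast
    then have "flag_succ (flag_pred y) \<in> flag_succ ` {x \<in> flags. has_succ x}" by (rule imageI)
    then show False using that flag_succ_flag_pred(2)[OF y pred] by simp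
  qed
  show "y = y'" if "y \<in> flags - flag_succ ` {x \<in> flags. has_succ x}"
    and "y' \<in> flags - flag_succ ` {x \<in> flags. has_succ x}" for y y'
  proof (rule flag_without_pred_unique)
    show "y \<in> flags" "y' \<in> flags" using that by blast+
    show "\<not> has_pred y" "\<not> has_pred y'" using no_pred that by blast+
  qed
qed

lemma is_succ_iff:
  assumes x: "x \<in> flags" and succ: "has_succ x"
  shows "is_succ S gam del n x y \<longleftrightarrow> y = flag_succ x"
proof -
  have "is_succ S gam del n x y \<longleftrightarrow> is_neighbour S gam del n (succ_level x) x y"
    by (cases "fsgn gam x n = 1") (simp_all add: is_succ_def succ_level_def low_level_eq_Max)
  then show ?thesis
    unfolding flag_succ_def using is_neighbour_iff_eq[OF x succ_level_less[OF succ]] by simp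
qed

theorem is_succ_immediate_successor:
  assumes x: "x \<in> flags" and not_last: "\<not> is_last_flag S gam del n x"
  shows "(\<exists>y. is_succ S gam del n x y) \<and>
    (\<forall>y. is_succ S gam del n x y \<longrightarrow> is_immediate_successor S gam del n x y)"
proof -
  have succ: "has_succ x"
  proof (rule ccontr)
    assume "\<not> has_succ x"
    then have "x \<notin> {x \<in> flags. has_succ x}" by simp
    then have "is_last_flag S gam del n x"
      unfolding is_last_flag_def
      by (intro ballI impI) (rule flag_chain.greatest_if_not_in_D[OF x])
    with not_last show False ..
  qed
  then have D: "x \<in> {x \<in> flags. has_succ x}" using x by simp
  have "is_immediate_successor S gam del n x (flag_succ x)"
    unfolding is_immediate_successor_def
  proof (intro conjI)
    show "flag_succ x \<in> flags" using flag_succ_in_flags[OF x succ] .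
    show "flag_lt S gam del x (flag_succ x)" using less_flag_succ[OF x succ] .
    show "\<not> (\<exists>z\<in>flags. flag_lt S gam del x z \<and> flag_lt S gam del z (flag_succ x))"
      using flag_chain.succ_immediate[OF D] by blast
  qed
  then show ?thesis using is_succ_iff[OF x succ] by simp
qed

end

theorem mainTheorem10:
  fixes S :: "nat \<Rightarrow> 'a set" and gam :: "'a \<Rightarrow> 'a" and del :: "'a \<Rightarrow> 'a set"
    and n :: nat and x :: "'a list"
  assumes "positive_opetope S gam del n"
    and "x \<in> max_flags S gam del n"
    and "\<not> is_last_flag S gam del n x"
  shows "(\<exists>y. is_succ S gam del n x y) \<and>
         (\<forall>y. is_succ S gam del n x y \<longrightarrow> is_immediate_successor S gam del n x y)"
proof -
  interpret opetopic_flags S gam del n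
    by unfold_locales (use assms(1) in \<open>simp add: positive_opetope_def\<close>)
  show ?thesis using is_succ_immediate_successor assms(2,3) .
qed

end
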